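(* Let $\mathcal{H}$ be a hypertree, $B$ a basic set of $\mathcal{H}$, and $u,v$ two different elements of $B$. Then [$I_\mathcal{H}(uv)=B$ and $uv$ is an edge of some host tree of $\mathcal{H}$] if and only if $u$ and $v$ lie in two different connected components of the 2-section of $\overline{\mathcal{H}_B}$.
   Context: A hypergraph $\mathcal{H}$ has a finite vertex set $V(\mathcal{H})$ and a finite family of nonempty subsets (edges). A host tree is a tree on $V(\mathcal{H})$ in which every edge induces a connected subgraph; a hypertree is a hypergraph with a host tree. For $V'\subseteq V(\mathcal{H})$, $I_\mathcal{H}(V')$ is the intersection of all edges containing $V'$, or $V(\mathcal{H})$ if none does; $I_\mathcal{H}(uv)=I_\mathcal{H}(\{u,v\})$. For $A\subseteq V(\mathcal{H})$, $\overline{\mathcal{H}_A}$ is the hypergraph on $V(\mathcal{H})$ whose edges are the edges of $\mathcal{H}$ not containing $A$. The 2-section of a hypergraph is the graph on its vertices where two distinct vertices are adjacent iff some edge contains both. A union of sets is connected if the intersection graph of the sets is connected. $Comp(\mathcal{H})$ is the hypergraph without repeated edges on $V(\mathcal{H})$ whose edges are $V(\mathcal{H})$, all singletons, and all proper subsets obtainable from edges of $\mathcal{H}$ by repeated nonempty intersections and connected unions; a basic set of $\mathcal{H}$ is an edge of $Comp(\mathcal{H})$ with more than one vertex that is not a connected union of strictly smaller edges of $Comp(\mathcal{H})$. *)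

theory Defs
  imports Main
begin

(* Hypergraph: vertex set V (finite), edges E (finite family of nonempty subsets of V).
   Repeated edges are irrelevant for all notions below, so E is a set of sets. *)
definition hypergraph :: "'a set \<Rightarrow> 'a set set \<Rightarrow> bool" where
  "hypergraph V E \<longleftrightarrow> finite V \<and> finite E \<and> (\<forall>e\<in>E. e \<noteq> {} \<and> e \<subseteq> V)"

definition connected_on :: "'b set \<Rightarrow> ('b \<Rightarrow> 'b \<Rightarrow> bool) \<Rightarrow> bool" where
  "connected_on S R \<longleftrightarrow>
     (\<forall>x\<in>S. \<forall>y\<in>S. (\<lambda>a b. a \<in> S \<and> b \<in> S \<and> R a b)\<^sup>*\<^sup>* x y)"

definition adj :: "'a set set \<Rightarrow> 'a \<Rightarrow> 'a \<Rightarrow> bool" where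
  "adj T x y \<longleftrightarrow> x \<noteq> y \<and> {x, y} \<in> T"

definition has_cycle :: "'a set set \<Rightarrow> bool" where
  "has_cycle T \<longleftrightarrow> (\<exists>xs. length xs \<ge> 3 \<and> distinct xs \<and>
      (\<forall>i. Suc i < length xs \<longrightarrow> adj T (xs ! i) (xs ! Suc i)) \<and> adj T (last xs) (hd xs))"

definition is_tree :: "'a set \<Rightarrow> 'a set set \<Rightarrow> bool" where
  "is_tree V T \<longleftrightarrow> V \<noteq> {} \<and> (\<forall>e\<in>T. e \<subseteq> V \<and> card e = 2) \<and>
      connected_on V (adj T) \<and> \<not> has_cycle T"

definition host_tree :: "'a set \<Rightarrow> 'a set set \<Rightarrow> 'a set set \<Rightarrow> bool" where
  "host_tree V E T \<longleftrightarrow> is_tree V T \<and> (\<forall>e\<in>E. connected_on e (adj T))"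

definition hypertree :: "'a set \<Rightarrow> 'a set set \<Rightarrow> bool" where
  "hypertree V E \<longleftrightarrow> hypergraph V E \<and> (\<exists>T. host_tree V E T)"

definition I_H :: "'a set \<Rightarrow> 'a set set \<Rightarrow> 'a set \<Rightarrow> 'a set" where
  "I_H V E V' = (if \<exists>e\<in>E. V' \<subseteq> e then \<Inter>{e\<in>E. V' \<subseteq> e} else V)"

(* edges of overline(H_A) *)
definition edges_not_containing :: "'a set set \<Rightarrow> 'a set \<Rightarrow> 'a set set" where
  "edges_not_containing E A = {e \<in> E. \<not> A \<subseteq> e}"

definition two_section_adj :: "'a set set \<Rightarrow> 'a \<Rightarrow> 'a \<Rightarrow> bool" where
  "two_section_adj E x y \<longleftrightarrow> x \<noteq> y \<and> (\<exists>e\<in>E. x \<in> e \<and> y \<in> e)"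

definition same_component :: "'a set \<Rightarrow> 'a set set \<Rightarrow> 'a \<Rightarrow> 'a \<Rightarrow> bool" where
  "same_component V E x y \<longleftrightarrow>
     (\<lambda>a b. a \<in> V \<and> b \<in> V \<and> two_section_adj E a b)\<^sup>*\<^sup>* x y"

definition connected_family :: "'a set set \<Rightarrow> bool" where
  "connected_family F \<longleftrightarrow> connected_on F (\<lambda>A B. A \<noteq> B \<and> A \<inter> B \<noteq> {})"

inductive_set comp_closure :: "'a set set \<Rightarrow> 'a set set" for E where
  base: "e \<in> E \<Longrightarrow> e \<in> comp_closure E"
| inter: "A \<in> comp_closure E \<Longrightarrow> B \<in> comp_closure E \<Longrightarrow> A \<inter> B \<noteq> {} \<Longrightarrow>
          A \<inter> B \<in> comp_closure E"
| union: "(\<And>X. X \<in> F \<Longrightarrow> X \<in> comp_closure E) \<Longrightarrow> finite F \<Longrightarrow> F \<noteq> {} \<Longrightarrow> connected_family F \<Longrightarrow>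
          \<Union>F \<in> comp_closure E"

definition Comp :: "'a set \<Rightarrow> 'a set set \<Rightarrow> 'a set set" where
  "Comp V E = {V} \<union> {{x} | x. x \<in> V} \<union> {X \<in> comp_closure E. X \<subset> V}"

definition basic_set :: "'a set \<Rightarrow> 'a set set \<Rightarrow> 'a set \<Rightarrow> bool" where
  "basic_set V E B \<longleftrightarrow> B \<in> Comp V E \<and> card B > 1 \<and>
     \<not> (\<exists>F. F \<subseteq> Comp V E \<and> (\<forall>X\<in>F. X \<subset> B) \<and> F \<noteq> {} \<and> connected_family F \<and> \<Union>F = B)"

end

theory Submission
  imports Defs "HOL-Library.Transitive_Closure_Table"
begin

(* If uv is an edge of a host tree T, removing it splits T into two subtrees, and a hyperedge
   meeting both sides is a connected subtree of T, so it contains u and v and hence I(uv).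
   Thus, when I(uv) = B, the hyperedges not containing B never join the two sides.

   Conversely, suppose u and v are separated, so that every hyperedge containing u and v
   contains B.  Relative to a host tree, every edge of Comp(H) is a connected union of subtrees
   that are intersections of hyperedges: subtrees of a tree are closed under intersection, and
   the intersection of two such unions is again one.  As B is basic, one of these parts is B
   itself, whence I(uv) = B.  Finally, the tree path from u to v leaves the 2-section component
   of u through some tree edge xy.  Every hyperedge containing x and y contains B, hence u and v,
   so exchanging xy for uv keeps all hyperedges connected and gives a host tree containing uv. *)

abbreviation reach :: "'a set set \<Rightarrow> 'a \<Rightarrow> 'a \<Rightarrow> bool" where
  "reach G \<equiv> (adj G)\<^sup>*\<^sup>*"

definition restrict_rel :: "'b set \<Rightarrow> ('b \<Rightarrow> 'b \<Rightarrow> bool) \<Rightarrow> 'b \<Rightarrow> 'b \<Rightarrow> bool" where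
  "restrict_rel S R = (\<lambda>a b. a \<in> S \<and> b \<in> S \<and> R a b)"

lemma connected_on_iff: "connected_on S R \<longleftrightarrow> (\<forall>x\<in>S. \<forall>y\<in>S. (restrict_rel S R)\<^sup>*\<^sup>* x y)"
  unfolding connected_on_def restrict_rel_def by simp

lemma symp_adj: "symp (adj G)"
  unfolding adj_def symp_def by (auto simp: insert_commute)

lemma symp_restrict_rel_adj: "symp (restrict_rel S (adj G))"
  unfolding symp_def restrict_rel_def by (metis sympD symp_adj)

lemma reach_sym: "reach G x y \<Longrightarrow> reach G y x"
  by (rule sympD[OF symp_rtranclp[OF symp_adj]])

lemma adj_Diff_singleton: "adj (G - {e}) x y \<longleftrightarrow> adj G x y \<and> {x,y} \<noteq> e"
  unfolding adj_def by auto

lemma adj_mono: "G \<subseteq> H \<Longrightarrow> adj G x y \<Longrightarrow> adj H x y"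
  unfolding adj_def by auto

lemma reach_mono: "G \<subseteq> H \<Longrightarrow> reach G x y \<Longrightarrow> reach H x y"
  by (metis adj_mono mono_rtranclp)

lemma rtranclp_lift:
  assumes "r\<^sup>*\<^sup>* x y" and "\<And>a b. r a b \<Longrightarrow> s\<^sup>*\<^sup>* a b"
  shows "s\<^sup>*\<^sup>* x y"
  using assms(1) by (induct rule: rtranclp_induct) (auto intro: rtranclp_trans assms(2))

lemma restrict_rel_rtranclp_mono:
  assumes "S \<subseteq> S'" and "\<And>a b. a \<in> S \<Longrightarrow> b \<in> S \<Longrightarrow> R a b \<Longrightarrow> R' a b"
    and "(restrict_rel S R)\<^sup>*\<^sup>* x y"
  shows "(restrict_rel S' R')\<^sup>*\<^sup>* x y"
proof -
  have "restrict_rel S R a b \<longrightarrow> restrict_rel S' R' a b" for a b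
    using assms(1,2) unfolding restrict_rel_def by blast
  then show ?thesis using mono_rtranclp assms(3) by metis
qed

lemma restrict_rel_adj_eq: "\<forall>e\<in>T. e \<subseteq> V \<Longrightarrow> restrict_rel V (adj T) = adj T"
  unfolding restrict_rel_def adj_def by (intro ext) blast

lemma connected_on_adj_iff_reach:
  "\<forall>e\<in>T. e \<subseteq> V \<Longrightarrow> connected_on V (adj T) \<longleftrightarrow> (\<forall>a\<in>V. \<forall>b\<in>V. reach T a b)"
  by (simp add: connected_on_iff restrict_rel_adj_eq)

lemma is_tree_reach:
  assumes "is_tree V T" and "a \<in> V" and "b \<in> V"
  shows "reach T a b"
proof -
  have "\<forall>e\<in>T. e \<subseteq> V" and "connected_on V (adj T)" using assms(1) unfolding is_tree_def by auto
  then show ?thesis using assms(2,3) by (simp add: connected_on_adj_iff_reach)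
qed

lemma rtranclp_crossing_step:
  assumes "r\<^sup>*\<^sup>* a b" and "P a" and "\<not> P b"
  shows "\<exists>x y. r x y \<and> P x \<and> \<not> P y"
  using assms by (induct rule: rtranclp_induct) auto

lemma rtrancl_path_restrict_rel:
  assumes "rtrancl_path r a zs b" and "set (a # zs) \<subseteq> S"
  shows "(restrict_rel S r)\<^sup>*\<^sup>* a b"
  using assms
proof (induct rule: rtrancl_path.induct)
  case (step x y ys z)
  then have "restrict_rel S r x y" by (simp add: restrict_rel_def)
  with step show ?case by (simp add: converse_rtranclp_into_rtranclp)
qed simp

lemma restrict_rel_simple_path:
  assumes "(restrict_rel S r)\<^sup>*\<^sup>* a b"
  obtains zs where "rtrancl_path r a zs b" and "distinct (a # zs)" and "set zs \<subseteq> S"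
proof -
  obtain zs where "rtrancl_path (restrict_rel S r) a zs b"
    using assms unfolding rtranclp_eq_rtrancl_path by blast
  then obtain zs' where path: "rtrancl_path (restrict_rel S r) a zs' b" "distinct (a # zs')"
    by (rule rtrancl_path_distinct)
  have "set zs' \<subseteq> S"
    using rtrancl_path_Range[OF path(1)] by (auto simp: restrict_rel_def)
  moreover have "rtrancl_path r a zs' b"
    using path(1) by (rule rtrancl_path_mono) (simp add: restrict_rel_def)
  ultimately show ?thesis using that path(2) by blast
qed

lemma reach_Diff_edge_if_avoids:
  assumes "rtrancl_path (adj T) a zs b" and "c \<notin> set (a # zs)"
  shows "reach (T - {{c,d}}) a b"
  using assms
proof (induct rule: rtrancl_path.induct)
  case (step x y ys z)
  then have "adj (T - {{c,d}}) x y" by (auto simp: adj_Diff_singleton)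
  with step show ?case by (simp add: converse_rtranclp_into_rtranclp)
qed simp

lemma reach_Diff_edge_cases:
  assumes "reach T x a"
  shows "reach (T - {{x,y}}) x a \<or> reach (T - {{x,y}}) y a"
  using assms
proof (induct rule: rtranclp_induct)
  case (step b c)
  show ?case
  proof (cases "{b,c} = {x,y}")
    case True
    then have "c = x \<or> c = y" by (auto simp: doubleton_eq_iff)
    then show ?thesis by auto
  next
    case False
    then have "adj (T - {{x,y}}) b c" using step(2) by (simp add: adj_Diff_singleton)
    then show ?thesis using step(3) by (meson rtranclp.rtrancl_into_rtrancl)
  qed
qed simp

lemma reach_insert_edge_cases:
  assumes "reach (H \<union> {{u,v}}) p z"
  shows "reach H p z \<or> (reach H p u \<and> reach H v z) \<or> (reach H p v \<and> reach H u z)"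
  using assms
proof (induct rule: rtranclp_induct)
  case (step z z')
  have "adj H z z' \<or> (z = u \<and> z' = v) \<or> (z = v \<and> z' = u)"
    using step(2) unfolding adj_def by (auto simp: doubleton_eq_iff)
  then show ?case
  proof (elim disjE)
    assume "adj H z z'"
    then show ?thesis using step(3) by (meson rtranclp.rtrancl_into_rtrancl)
  qed (use step(3) in auto)
qed simp

lemma separating_edge_within:
  assumes "(restrict_rel S (adj T))\<^sup>*\<^sup>* a b"
    and "reach (T - {{p,q}}) p a" and "\<not> reach (T - {{p,q}}) p b"
  shows "p \<in> S \<and> q \<in> S"
proof -
  obtain x y where xy: "restrict_rel S (adj T) x y"
    "reach (T - {{p,q}}) p x" "\<not> reach (T - {{p,q}}) p y"
    using rtranclp_crossing_step[OF assms(1), of "reach (T - {{p,q}}) p"] assms(2,3) by blast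
  show ?thesis
  proof (cases "{x,y} = {p,q}")
    case True
    then show ?thesis using xy(1) unfolding restrict_rel_def by (auto simp: doubleton_eq_iff)
  next
    case False
    then have "adj (T - {{p,q}}) x y" using xy(1) by (simp add: adj_Diff_singleton restrict_rel_def)
    then show ?thesis using xy(2,3) by (meson rtranclp.rtrancl_into_rtrancl)
  qed
qed

lemma acyclic_edge_separates:
  assumes "\<not> has_cycle T" and "{p,q} \<in> T" and "p \<noteq> q"
  shows "\<not> reach (T - {{p,q}}) p q"
proof
  assume "reach (T - {{p,q}}) p q"
  then obtain zs where "rtrancl_path (adj (T - {{p,q}})) p zs q"
    unfolding rtranclp_eq_rtrancl_path by blast
  then obtain zs where path: "rtrancl_path (adj (T - {{p,q}})) p zs q" and dist: "distinct (p # zs)"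
    by (rule rtrancl_path_distinct)
  have "zs \<noteq> []" using path assms(3) by (cases rule: rtrancl_path.cases) auto
  then have last_zs: "last zs = q" using rtrancl_path_last[OF path] by blast
  have "length zs \<ge> 2"
  proof (rule ccontr)
    assume "\<not> length zs \<ge> 2"
    then obtain z where "zs = [z]" using \<open>zs \<noteq> []\<close> by (cases zs; cases "tl zs") auto
    then have "adj (T - {{p,q}}) p q" using path last_zs by (auto elim: rtrancl_path.cases)
    then show False by (simp add: adj_Diff_singleton)
  qed
  have "has_cycle T"
    unfolding has_cycle_def
  proof (intro exI conjI allI impI)
    show "3 \<le> length (p # zs)" using \<open>length zs \<ge> 2\<close> by simp
    show "distinct (p # zs)" by fact
    fix i assume "Suc i < length (p # zs)"
    then have "adj (T - {{p,q}}) ((p # zs) ! i) (zs ! i)" using rtrancl_path_nth[OF path] by simp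
    then show "adj T ((p # zs) ! i) ((p # zs) ! Suc i)" by (simp add: adj_Diff_singleton)
  next
    show "adj T (last (p # zs)) (hd (p # zs))" using last_zs \<open>zs \<noteq> []\<close> assms(2,3)
      by (simp add: adj_def insert_commute)
  qed
  then show False using assms(1) by simp
qed

lemma consecutive_neq_last_hd:
  assumes "distinct xs" and "length xs \<ge> 3" and "Suc j < length xs"
  shows "{xs ! j, xs ! Suc j} \<noteq> {last xs, hd xs}"
proof
  assume "{xs ! j, xs ! Suc j} = {last xs, hd xs}"
  moreover have "xs \<noteq> []" using assms(2) by auto
  then have "last xs = xs ! (length xs - 1)" "hd xs = xs ! 0"
    by (simp_all add: last_conv_nth hd_conv_nth)
  ultimately have "xs ! j \<in> {xs ! (length xs - 1), xs ! 0}" "xs ! Suc j \<in> {xs ! (length xs - 1), xs ! 0}"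
    by auto
  moreover have "i \<in> {length xs - 1, 0}"
    if "xs ! i \<in> {xs ! (length xs - 1), xs ! 0}" and "i < length xs" for i
    using that nth_eq_iff_index_eq[OF assms(1), of i] \<open>xs \<noteq> []\<close> by auto
  ultimately have "j \<in> {length xs - 1, 0}" "Suc j \<in> {length xs - 1, 0}"
    using assms(3) by auto
  then show False using assms(2) by auto
qed

lemma acyclic_if_edges_separate:
  assumes "\<And>p q. {p,q} \<in> T \<Longrightarrow> p \<noteq> q \<Longrightarrow> \<not> reach (T - {{p,q}}) p q"
  shows "\<not> has_cycle T"
proof
  assume "has_cycle T"
  then obtain xs where len: "length xs \<ge> 3" and dist: "distinct xs"
    and steps: "\<forall>i. Suc i < length xs \<longrightarrow> adj T (xs ! i) (xs ! Suc i)"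
    and closing: "adj T (last xs) (hd xs)"
    unfolding has_cycle_def by blast
  let ?G = "T - {{last xs, hd xs}}"
  have "xs \<noteq> []" using len by auto
  have "reach ?G (hd xs) (xs ! j)" if "j < length xs" for j
    using that
  proof (induct j)
    case 0
    then show ?case using \<open>xs \<noteq> []\<close> by (simp add: hd_conv_nth)
  next
    case (Suc j)
    then have "adj ?G (xs ! j) (xs ! Suc j)"
      using steps consecutive_neq_last_hd[OF dist len] by (simp add: adj_Diff_singleton)
    with Suc show ?case by (meson Suc_lessD rtranclp.rtrancl_into_rtrancl)
  qed
  then have "reach ?G (hd xs) (last xs)" using \<open>xs \<noteq> []\<close> by (simp add: last_conv_nth)
  then have "reach ?G (last xs) (hd xs)" by (rule reach_sym)
  moreover have "{last xs, hd xs} \<in> T" "last xs \<noteq> hd xs" using closing unfolding adj_def by auto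
  ultimately show False using assms by blast
qed

text \<open>The rest of a simple path starting with the edge \<open>xy\<close> avoids \<open>x\<close>, so \<open>xy\<close> separates
  \<open>x\<close> from the endpoint; a path inside \<open>S\<close> between the ends must therefore use \<open>xy\<close>.\<close>

lemma simple_path_within_connected:
  assumes acyclic: "\<not> has_cycle T" and path: "rtrancl_path (adj T) a zs b"
    and dist: "distinct (a # zs)"
    and S: "connected_on S (adj T)" and "a \<in> S" and "b \<in> S"
  shows "set zs \<subseteq> S"
  using path dist assms(5,6)
proof (induct rule: rtrancl_path.induct)
  case (step x y ys z)
  have xy: "x \<noteq> y" "{x,y} \<in> T" using step(1) unfolding adj_def by auto
  have "reach (T - {{x,y}}) y z"
    using reach_Diff_edge_if_avoids[OF step(2), of x y] step(4) by simp
  then have "\<not> reach (T - {{x,y}}) x z"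
    using acyclic_edge_separates[OF acyclic xy(2,1)] reach_sym rtranclp_trans by metis
  moreover have "(restrict_rel S (adj T))\<^sup>*\<^sup>* x z" using S step(5,6) unfolding connected_on_iff by blast
  ultimately have "y \<in> S" using separating_edge_within[of S T x z x y] by simp
  then show ?case using step(3,4,6) by simp
qed simp

lemma connected_on_Int:
  assumes acyclic: "\<not> has_cycle T"
    and S1: "connected_on S1 (adj T)" and S2: "connected_on S2 (adj T)"
  shows "connected_on (S1 \<inter> S2) (adj T)"
  unfolding connected_on_iff
proof (intro ballI)
  fix a b assume ab: "a \<in> S1 \<inter> S2" "b \<in> S1 \<inter> S2"
  then have "(restrict_rel S1 (adj T))\<^sup>*\<^sup>* a b" using S1 unfolding connected_on_iff by blast
  then obtain zs where path: "rtrancl_path (adj T) a zs b" "distinct (a # zs)" "set zs \<subseteq> S1"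
    by (rule restrict_rel_simple_path)
  have "set zs \<subseteq> S2" using simple_path_within_connected[OF acyclic path(1,2) S2] ab by blast
  then have "set (a # zs) \<subseteq> S1 \<inter> S2" using path(3) ab by auto
  then show "(restrict_rel (S1 \<inter> S2) (adj T))\<^sup>*\<^sup>* a b" by (rule rtrancl_path_restrict_rel[OF path(1)])
qed

lemma connected_on_reach_set:
  assumes "G \<subseteq> T"
  shows "connected_on {z. reach G x z} (adj T)"
proof -
  let ?P = "{z. reach G x z}"
  have from_x: "(restrict_rel ?P (adj T))\<^sup>*\<^sup>* x z" if "reach G x z" for z
    using that
  proof (induct rule: rtranclp_induct)
    case (step b c)
    have "reach G x c" using step(1,2) by (rule rtranclp.rtrancl_into_rtrancl)
    then have "restrict_rel ?P (adj T) b c"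
      using step(1) adj_mono[OF assms step(2)] unfolding restrict_rel_def by simp
    then show ?case by (rule rtranclp.rtrancl_into_rtrancl[OF step(3)])
  qed simp
  show ?thesis unfolding connected_on_iff
  proof (intro ballI)
    fix a b assume "a \<in> ?P" "b \<in> ?P"
    then have "(restrict_rel ?P (adj T))\<^sup>*\<^sup>* x a" "(restrict_rel ?P (adj T))\<^sup>*\<^sup>* x b"
      using from_x by simp_all
    then have "(restrict_rel ?P (adj T))\<^sup>*\<^sup>* a x" "(restrict_rel ?P (adj T))\<^sup>*\<^sup>* x b"
      using sympD[OF symp_rtranclp[OF symp_restrict_rel_adj]] by auto
    then show "(restrict_rel ?P (adj T))\<^sup>*\<^sup>* a b" by (rule rtranclp_trans)
  qed
qed

definition overlap :: "'a set \<Rightarrow> 'a set \<Rightarrow> bool" where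
  "overlap A B \<longleftrightarrow> A \<noteq> B \<and> A \<inter> B \<noteq> {}"

lemma connected_family_iff:
  "connected_family F \<longleftrightarrow> (\<forall>X\<in>F. \<forall>Y\<in>F. (restrict_rel F overlap)\<^sup>*\<^sup>* X Y)"
  unfolding connected_family_def connected_on_iff overlap_def by simp

lemma connected_family_singleton: "connected_family {A}"
  unfolding connected_family_iff by simp

lemma overlap_if_common_point:
  "A \<in> F \<Longrightarrow> B \<in> F \<Longrightarrow> z \<in> A \<Longrightarrow> z \<in> B \<Longrightarrow> (restrict_rel F overlap)\<^sup>*\<^sup>* A B"
  by (cases "A = B") (auto simp: restrict_rel_def overlap_def intro!: r_into_rtranclp)

lemma connected_on_Union:
  assumes F: "connected_family F" and conn: "\<forall>A\<in>F. connected_on A (adj T)"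
  shows "connected_on (\<Union>F) (adj T)"
  unfolding connected_on_iff
proof (intro ballI)
  let ?R = "restrict_rel (\<Union>F) (adj T)"
  have within: "?R\<^sup>*\<^sup>* a z" if "A \<in> F" "a \<in> A" "z \<in> A" for A a z
    using conn that unfolding connected_on_iff
    by (blast intro: restrict_rel_rtranclp_mono[of A "\<Union>F" "adj T"])
  fix a b assume "a \<in> \<Union>F" "b \<in> \<Union>F"
  then obtain X1 X2 where X: "X1 \<in> F" "a \<in> X1" "X2 \<in> F" "b \<in> X2" by blast
  have "(restrict_rel F overlap)\<^sup>*\<^sup>* X1 X2" using F X unfolding connected_family_iff by blast
  then have "\<forall>z\<in>X2. ?R\<^sup>*\<^sup>* a z"
  proof (induct rule: rtranclp_induct)
    case base
    then show ?case using within X(1,2) by blast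
  next
    case (step Y Z)
    then obtain w where w: "w \<in> Y" "w \<in> Z" "Z \<in> F" by (auto simp: restrict_rel_def overlap_def)
    then show ?case using step(3) within[OF w(3) w(2)] rtranclp_trans by metis
  qed
  then show "?R\<^sup>*\<^sup>* a b" using X by blast
qed

text \<open>If no member contained both \<open>p\<close> and \<open>q\<close>, every member would stay on one side
  of the cut \<open>T - {{p,q}}\<close>, so overlapping members could not lead from \<open>p\<close> to \<open>q\<close>.\<close>

lemma tree_edge_within_member:
  assumes acyclic: "\<not> has_cycle T" and F: "connected_family F"
    and conn: "\<forall>A\<in>F. connected_on A (adj T)" and pq: "{p,q} \<in> T" "p \<noteq> q"
    and p: "p \<in> \<Union>F" and q: "q \<in> \<Union>F"
  shows "\<exists>A\<in>F. p \<in> A \<and> q \<in> A"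
proof (rule ccontr)
  assume none: "\<not> (\<exists>A\<in>F. p \<in> A \<and> q \<in> A)"
  define P where "P = reach (T - {{p,q}}) p"
  have side: "\<forall>y\<in>A. P y" if "A \<in> F" "x \<in> A" "P x" for A x
  proof
    fix y assume "y \<in> A"
    show "P y"
    proof (rule ccontr)
      assume "\<not> P y"
      have "(restrict_rel A (adj T))\<^sup>*\<^sup>* x y"
        using conn that(1,2) \<open>y \<in> A\<close> unfolding connected_on_iff by blast
      then have "p \<in> A \<and> q \<in> A" using that(3) \<open>\<not> P y\<close> unfolding P_def by (rule separating_edge_within)
      then show False using none that(1) by blast
    qed
  qed
  obtain A1 where A1: "A1 \<in> F" "p \<in> A1" using p by blast
  obtain A2 where A2: "A2 \<in> F" "q \<in> A2" using q by blast
  have walk: "(restrict_rel F overlap)\<^sup>*\<^sup>* A1 A2" using F A1 A2 unfolding connected_family_iff by blast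
  define Q where "Q = (\<lambda>A. A \<in> F \<and> (\<forall>y\<in>A. P y))"
  have "Q A1" unfolding Q_def using side[OF A1] A1(1) by (simp add: P_def)
  have "Q A2"
  proof (rule ccontr)
    assume "\<not> Q A2"
    then obtain X Y where XY: "restrict_rel F overlap X Y" "Q X" "\<not> Q Y"
      using rtranclp_crossing_step[OF walk, of Q] \<open>Q A1\<close> by blast
    then obtain z where "z \<in> X" "z \<in> Y" "Y \<in> F" by (auto simp: restrict_rel_def overlap_def)
    then show False using XY(2,3) side unfolding Q_def by blast
  qed
  then have "P q" using A2 unfolding Q_def by blast
  then show False using acyclic_edge_separates[OF acyclic pq] unfolding P_def by blast
qed

lemma connected_family_if_covers_edges:
  assumes S: "connected_on S (adj T)" and G: "\<Union>G = S" "\<forall>g\<in>G. g \<noteq> {}"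
    and cover: "\<And>p q. p \<in> S \<Longrightarrow> q \<in> S \<Longrightarrow> adj T p q \<Longrightarrow> \<exists>g\<in>G. p \<in> g \<and> q \<in> g"
  shows "connected_family G"
  unfolding connected_family_iff
proof (intro ballI)
  fix g1 g2 assume g: "g1 \<in> G" "g2 \<in> G"
  obtain p where p: "p \<in> g1" using G(2) g by blast
  obtain q where q: "q \<in> g2" using G(2) g by blast
  have "(restrict_rel S (adj T))\<^sup>*\<^sup>* p q" using S p q g G(1) unfolding connected_on_iff by blast
  then have "\<forall>g\<in>G. q \<in> g \<longrightarrow> (restrict_rel G overlap)\<^sup>*\<^sup>* g1 g"
  proof (induct rule: rtranclp_induct)
    case base
    then show ?case using overlap_if_common_point[OF g(1) _ p] by blast
  next
    case (step y z)
    then obtain g0 where g0: "g0 \<in> G" "y \<in> g0" "z \<in> g0" using cover unfolding restrict_rel_def by blast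
    then have "(restrict_rel G overlap)\<^sup>*\<^sup>* g1 g0" using step(3) by blast
    then show ?case using overlap_if_common_point[OF g0(1) _ g0(3)] rtranclp_trans by metis
  qed
  then show "(restrict_rel G overlap)\<^sup>*\<^sup>* g1 g2" using g(2) q by blast
qed

lemma connected_family_UN:
  assumes F: "connected_family F"
    and parts: "\<And>X. X \<in> F \<Longrightarrow> connected_family (\<Phi> X) \<and> \<Union>(\<Phi> X) = X"
  shows "connected_family (\<Union>X\<in>F. \<Phi> X)"
  unfolding connected_family_iff
proof (intro ballI)
  let ?G = "\<Union>X\<in>F. \<Phi> X"
  let ?R = "restrict_rel ?G overlap"
  have within: "?R\<^sup>*\<^sup>* g h" if "X \<in> F" "g \<in> \<Phi> X" "h \<in> \<Phi> X" for X g h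
    using parts[OF that(1)] that unfolding connected_family_iff
    by (blast intro: restrict_rel_rtranclp_mono[of "\<Phi> X" ?G overlap])
  fix g1 g2 assume "g1 \<in> ?G" "g2 \<in> ?G"
  then obtain X1 X2 where X: "X1 \<in> F" "g1 \<in> \<Phi> X1" "X2 \<in> F" "g2 \<in> \<Phi> X2" by blast
  have "(restrict_rel F overlap)\<^sup>*\<^sup>* X1 X2" using F X unfolding connected_family_iff by blast
  then have "\<forall>g\<in>\<Phi> X2. ?R\<^sup>*\<^sup>* g1 g"
  proof (induct rule: rtranclp_induct)
    case base
    then show ?case using within X(1,2) by blast
  next
    case (step Y Z)
    then obtain w where w: "w \<in> Y" "w \<in> Z" "Y \<in> F" "Z \<in> F" by (auto simp: restrict_rel_def overlap_def)
    obtain gy where gy: "gy \<in> \<Phi> Y" "w \<in> gy" using parts[OF w(3)] w(1) by blast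
    obtain gz where gz: "gz \<in> \<Phi> Z" "w \<in> gz" using parts[OF w(4)] w(2) by blast
    have "?R\<^sup>*\<^sup>* g1 gy" using step(3) gy(1) by blast
    moreover have "?R\<^sup>*\<^sup>* gy gz"
      by (rule overlap_if_common_point[OF _ _ gy(2) gz(2)]) (use gy gz w in auto)
    ultimately have "?R\<^sup>*\<^sup>* g1 gz" by (rule rtranclp_trans)
    then show ?case using within[OF w(4) gz(1)] rtranclp_trans by metis
  qed
  then show "?R\<^sup>*\<^sup>* g1 g2" using X by blast
qed

definition edge_intersection :: "'a set set \<Rightarrow> 'a set \<Rightarrow> bool" where
  "edge_intersection E A \<longleftrightarrow> (\<exists>S. S \<subseteq> E \<and> S \<noteq> {} \<and> A = \<Inter>S)"

lemma edge_intersection_Int: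
  "edge_intersection E A \<Longrightarrow> edge_intersection E B \<Longrightarrow> edge_intersection E (A \<inter> B)"
  unfolding edge_intersection_def by (metis Inter_Un_distrib Un_empty Un_subset_iff)

lemma edge_intersection_in_comp_closure:
  assumes "finite E" and "edge_intersection E A" and "A \<noteq> {}"
  shows "A \<in> comp_closure E"
proof -
  obtain S where S: "S \<subseteq> E" "S \<noteq> {}" "A = \<Inter>S"
    using assms(2) unfolding edge_intersection_def by blast
  have "finite S" using assms(1) S(1) finite_subset by blast
  then have "\<Inter>S \<in> comp_closure E" using S(2,1) assms(3)[unfolded S(3)]
  proof (induct rule: finite_ne_induct)
    case (singleton e) then show ?case by (auto intro: comp_closure.base)
  next
    case (insert e S)
    then have "\<Inter>S \<in> comp_closure E" "e \<in> comp_closure E" by (auto intro: comp_closure.base)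
    with insert(6) show ?case using comp_closure.inter[of e E "\<Inter>S"] by simp
  qed
  then show ?thesis using S(3) by simp
qed

definition union_of_subtree_intersections :: "'a set set \<Rightarrow> 'a set set \<Rightarrow> 'a set \<Rightarrow> bool" where
  "union_of_subtree_intersections T E X \<longleftrightarrow> (\<exists>F. F \<noteq> {} \<and> connected_family F \<and> \<Union>F = X \<and>
      (\<forall>A\<in>F. A \<noteq> {} \<and> connected_on A (adj T) \<and> edge_intersection E A))"

lemma union_of_subtree_intersections_connected:
  "union_of_subtree_intersections T E X \<Longrightarrow> connected_on X (adj T)"
  unfolding union_of_subtree_intersections_def using connected_on_Union by blast

lemma union_of_subtree_intersections_Int:
  assumes acyclic: "\<not> has_cycle T"
    and A: "union_of_subtree_intersections T E A" and B: "union_of_subtree_intersections T E B"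
    and AB: "A \<inter> B \<noteq> {}"
  shows "union_of_subtree_intersections T E (A \<inter> B)"
proof -
  obtain FA where FA: "connected_family FA" "\<Union>FA = A"
    "\<forall>a\<in>FA. a \<noteq> {} \<and> connected_on a (adj T) \<and> edge_intersection E a"
    using A unfolding union_of_subtree_intersections_def by blast
  obtain FB where FB: "connected_family FB" "\<Union>FB = B"
    "\<forall>b\<in>FB. b \<noteq> {} \<and> connected_on b (adj T) \<and> edge_intersection E b"
    using B unfolding union_of_subtree_intersections_def by blast
  define G where "G = {a \<inter> b | a b. a \<in> FA \<and> b \<in> FB \<and> a \<inter> b \<noteq> {}}"
  have UG: "\<Union>G = A \<inter> B" unfolding G_def using FA(2) FB(2) by blast
  have members: "\<forall>g\<in>G. g \<noteq> {} \<and> connected_on g (adj T) \<and> edge_intersection E g"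
  proof
    fix g assume "g \<in> G"
    then obtain a b where "g = a \<inter> b" "a \<in> FA" "b \<in> FB" "a \<inter> b \<noteq> {}" unfolding G_def by blast
    then show "g \<noteq> {} \<and> connected_on g (adj T) \<and> edge_intersection E g"
      using FA(3) FB(3) connected_on_Int[OF acyclic] edge_intersection_Int by metis
  qed
  have "connected_on (A \<inter> B) (adj T)"
    using connected_on_Int[OF acyclic] union_of_subtree_intersections_connected[OF A]
      union_of_subtree_intersections_connected[OF B] by blast
  then have "connected_family G"
  proof (rule connected_family_if_covers_edges[OF _ UG])
    show "\<forall>g\<in>G. g \<noteq> {}" using members by blast
  next
    fix p q assume pq: "p \<in> A \<inter> B" "q \<in> A \<inter> B" "adj T p q"
    then have edge: "{p,q} \<in> T" "p \<noteq> q" unfolding adj_def by auto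
    obtain a where "a \<in> FA" "p \<in> a" "q \<in> a"
      using tree_edge_within_member[OF acyclic FA(1) _ edge] FA(2,3) pq by blast
    moreover obtain b where "b \<in> FB" "p \<in> b" "q \<in> b"
      using tree_edge_within_member[OF acyclic FB(1) _ edge] FB(2,3) pq by blast
    ultimately show "\<exists>g\<in>G. p \<in> g \<and> q \<in> g" unfolding G_def by blast
  qed
  moreover have "G \<noteq> {}" using UG AB by auto
  ultimately show ?thesis unfolding union_of_subtree_intersections_def using UG members by blast
qed

lemma union_of_subtree_intersections_Union:
  assumes F: "connected_family F" "F \<noteq> {}"
    and parts: "\<And>X. X \<in> F \<Longrightarrow> union_of_subtree_intersections T E X"
  shows "union_of_subtree_intersections T E (\<Union>F)"
proof -
  obtain \<Phi> where \<Phi>: "\<And>X. X \<in> F \<Longrightarrow> \<Phi> X \<noteq> {} \<and> connected_family (\<Phi> X) \<and> \<Union>(\<Phi> X) = X \<and>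
      (\<forall>A\<in>\<Phi> X. A \<noteq> {} \<and> connected_on A (adj T) \<and> edge_intersection E A)"
    using parts unfolding union_of_subtree_intersections_def by metis
  define G where "G = (\<Union>X\<in>F. \<Phi> X)"
  have "connected_family G" unfolding G_def using \<Phi> by (intro connected_family_UN[OF F(1)]) blast
  moreover have "\<Union>G = \<Union>F"
  proof -
    have "\<Union>G = (\<Union>X\<in>F. \<Union>(\<Phi> X))" unfolding G_def by blast
    also have "\<dots> = (\<Union>X\<in>F. X)" using \<Phi> by (intro SUP_cong) auto
    finally show ?thesis by simp
  qed
  moreover have "G \<noteq> {}" unfolding G_def using \<Phi> F(2) by fastforce
  moreover have "\<forall>A\<in>G. A \<noteq> {} \<and> connected_on A (adj T) \<and> edge_intersection E A"
    unfolding G_def using \<Phi> by blast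
  ultimately show ?thesis unfolding union_of_subtree_intersections_def by blast
qed

lemma comp_closure_union_of_subtree_intersections:
  assumes acyclic: "\<not> has_cycle T" and edges: "\<forall>e\<in>E. e \<noteq> {} \<and> connected_on e (adj T)"
    and "X \<in> comp_closure E"
  shows "union_of_subtree_intersections T E X"
  using assms(3)
proof (induct rule: comp_closure.induct)
  case (base e)
  have "edge_intersection E e" unfolding edge_intersection_def using base by (intro exI[of _ "{e}"]) auto
  then show ?case unfolding union_of_subtree_intersections_def using base edges
    by (intro exI[of _ "{e}"]) (auto simp: connected_family_singleton)
next
  case (inter A B)
  then show ?case using union_of_subtree_intersections_Int[OF acyclic] by blast
next
  case (union F)
  then show ?case using union_of_subtree_intersections_Union by blast
qed

lemma basic_set_cases:
  assumes "basic_set V E B"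
  shows "B = V \<or> (B \<in> comp_closure E \<and> B \<subset> V)"
proof -
  have "B \<noteq> {x}" for x using assms unfolding basic_set_def by auto
  then show ?thesis using assms unfolding basic_set_def Comp_def by blast
qed

lemma basic_set_edge_intersection:
  assumes "hypertree V E" and basic: "basic_set V E B"
  shows "B = V \<or> edge_intersection E B"
proof (cases "B = V")
  case False
  then have B: "B \<in> comp_closure E" "B \<subset> V" using basic_set_cases[OF basic] by auto
  obtain T where "hypergraph V E" and "host_tree V E T"
    using assms(1) unfolding hypertree_def by blast
  then have "finite E" and "\<not> has_cycle T" and "\<forall>e\<in>E. e \<noteq> {} \<and> connected_on e (adj T)"
    unfolding hypergraph_def host_tree_def is_tree_def by auto
  then obtain F where F: "F \<noteq> {}" "connected_family F" "\<Union>F = B"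
    and parts: "\<forall>A\<in>F. A \<noteq> {} \<and> edge_intersection E A"
    using comp_closure_union_of_subtree_intersections[OF _ _ B(1)]
    unfolding union_of_subtree_intersections_def by metis
  have "\<not> (\<forall>A\<in>F. A \<subset> B)"
  proof
    assume proper: "\<forall>A\<in>F. A \<subset> B"
    have "F \<subseteq> Comp V E"
      unfolding Comp_def using proper parts B(2) edge_intersection_in_comp_closure[OF \<open>finite E\<close>]
      by blast
    then show False using basic proper F unfolding basic_set_def by blast
  qed
  then obtain A where "A \<in> F" "A = B" using F(3) by blast
  then show ?thesis using parts by blast
qed simp

lemma path_exit_edge:
  assumes "rtrancl_path (adj T) a zs b" and "distinct (a # zs)" and "a \<in> C" and "b \<notin> C"
  shows "\<exists>x y. x \<in> C \<and> y \<notin> C \<and> adj T x y \<and> reach (T - {{x,y}}) a x \<and> reach (T - {{x,y}}) y b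
          \<and> x \<in> set (a # zs) \<and> y \<in> set (a # zs)"
  using assms
proof (induct rule: rtrancl_path.induct)
  case (step a' y' ys z)
  show ?case
  proof (cases "y' \<in> C")
    case False
    have "reach (T - {{a', y'}}) y' z"
      using reach_Diff_edge_if_avoids[OF step(2), of a' y'] step(4) by simp
    then show ?thesis using step(1,5) False by (intro exI[of _ a'] exI[of _ y']) auto
  next
    case True
    obtain x y where xy: "x \<in> C" "y \<notin> C" "adj T x y" "reach (T - {{x,y}}) y' x"
      "reach (T - {{x,y}}) y z" "x \<in> set (y' # ys)" "y \<in> set (y' # ys)"
      using step(3)[OF _ True step(6)] step(4) by auto
    have "a' \<notin> set (y' # ys)" using step(4) by simp
    then have "{a', y'} \<noteq> {x, y}" using xy(6,7) by (auto simp: doubleton_eq_iff)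
    then have "adj (T - {{x,y}}) a' y'" using step(1) by (simp add: adj_Diff_singleton)
    then have "reach (T - {{x,y}}) a' x" using xy(4) by (rule converse_rtranclp_into_rtranclp)
    then show ?thesis using xy by (intro exI[of _ x] exI[of _ y]) auto
  qed
qed simp

locale edge_exchange =
  fixes V :: "'a set" and T :: "'a set set" and x y u v :: 'a
  assumes tree: "is_tree V T" and adj_x_y: "adj T x y"
    and x_u: "reach (T - {{x,y}}) x u" and y_v: "reach (T - {{x,y}}) y v"
    and u_in_V: "u \<in> V" and v_in_V: "v \<in> V" and u_neq_v: "u \<noteq> v"
begin

abbreviation forest :: "'a set set" where
  "forest \<equiv> T - {{x,y}}"

abbreviation exchanged :: "'a set set" where
  "exchanged \<equiv> forest \<union> {{u,v}}"

lemma tree_acyclic: "\<not> has_cycle T"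
  using tree by (simp add: is_tree_def)

lemma edges_in_V: "\<forall>e\<in>T. e \<subseteq> V"
  using tree by (simp add: is_tree_def)

lemma sides_disjoint:
  assumes "reach forest x z" and "reach forest y z"
  shows False
proof -
  have "reach forest x y" using assms(1) reach_sym[OF assms(2)] by (rule rtranclp_trans)
  moreover have "{x,y} \<in> T" "x \<noteq> y" using adj_x_y unfolding adj_def by auto
  ultimately show False using acyclic_edge_separates[OF tree_acyclic] by blast
qed

lemma reach_forest_exchanged: "reach forest a b \<Longrightarrow> reach exchanged a b"
  by (rule reach_mono[rotated]) auto

lemma reach_exchanged_from_x:
  assumes "a \<in> V"
  shows "reach exchanged x a"
proof -
  have "x \<in> V" using adj_x_y edges_in_V unfolding adj_def by blast
  with tree have "reach T x a" using assms by (rule is_tree_reach)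
  from reach_Diff_edge_cases[OF this] show ?thesis
  proof
    assume "reach forest x a"
    then show ?thesis by (rule reach_forest_exchanged)
  next
    assume "reach forest y a"
    have "reach exchanged x u" using x_u by (rule reach_forest_exchanged)
    moreover have "adj exchanged u v" using u_neq_v unfolding adj_def by auto
    moreover have "reach exchanged v y" using reach_sym[OF y_v] by (rule reach_forest_exchanged)
    moreover have "reach exchanged y a" using \<open>reach forest y a\<close> by (rule reach_forest_exchanged)
    ultimately show ?thesis by (meson rtranclp.rtrancl_into_rtrancl rtranclp_trans)
  qed
qed

lemma connected_exchanged: "connected_on V (adj exchanged)"
proof -
  have "\<forall>e\<in>exchanged. e \<subseteq> V" using edges_in_V u_in_V v_in_V by auto
  moreover have "reach exchanged a b" if "a \<in> V" "b \<in> V" for a b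
    using reach_sym[OF reach_exchanged_from_x[OF that(1)]] reach_exchanged_from_x[OF that(2)]
    by (rule rtranclp_trans)
  ultimately show ?thesis by (simp add: connected_on_adj_iff_reach)
qed

lemma exchanged_edge_separates_new:
  "\<not> reach (exchanged - {{u,v}}) u v"
proof
  assume "reach (exchanged - {{u,v}}) u v"
  then have "reach forest u v" by (rule reach_mono[rotated]) auto
  with x_u have "reach forest x v" by (rule rtranclp_trans)
  with y_v show False using sides_disjoint by blast
qed

lemma exchanged_edge_separates_old:
  assumes "{p,q} \<in> exchanged" and "p \<noteq> q" and "{p,q} \<noteq> {u,v}"
  shows "\<not> reach (exchanged - {{p,q}}) p q"
proof
  define H where "H = forest - {{p,q}}"
  have pq: "{p,q} \<in> forest" using assms(1,3) by auto
  have H_forest: "reach forest a b" if "reach H a b" for a b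
    using that by (rule reach_mono[rotated]) (auto simp: H_def)
  have step_pq: "reach forest a q" if "reach forest a p" for a
    using that pq assms(2) by (meson adj_def rtranclp.rtrancl_into_rtrancl)
  assume "reach (exchanged - {{p,q}}) p q"
  moreover have "exchanged - {{p,q}} = H \<union> {{u,v}}" unfolding H_def using assms(3) by auto
  ultimately have "reach H p q \<or> (reach H p u \<and> reach H v q) \<or> (reach H p v \<and> reach H u q)"
    by (simp add: reach_insert_edge_cases)
  then show False
  proof (elim disjE conjE)
    assume "reach H p q"
    then have "reach (T - {{p,q}}) p q" by (rule reach_mono[rotated]) (auto simp: H_def)
    then show False using acyclic_edge_separates[OF tree_acyclic _ assms(2)] pq by blast
  next
    assume "reach H p u" "reach H v q"
    then have "reach forest x q" "reach forest y q"
      using x_u y_v H_forest reach_sym step_pq by (metis rtranclp_trans)+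
    then show False by (rule sides_disjoint)
  next
    assume "reach H p v" "reach H u q"
    then have "reach forest x q" "reach forest y q"
      using x_u y_v H_forest reach_sym step_pq by (metis rtranclp_trans)+
    then show False by (rule sides_disjoint)
  qed
qed

lemma acyclic_exchanged: "\<not> has_cycle exchanged"
proof (rule acyclic_if_edges_separate)
  fix p q assume pq: "{p,q} \<in> exchanged" "p \<noteq> q"
  show "\<not> reach (exchanged - {{p,q}}) p q"
  proof (cases "{p,q} = {u,v}")
    case True
    then consider "p = u" "q = v" | "p = v" "q = u" by (auto simp: doubleton_eq_iff)
    then show ?thesis
    proof cases
      case 1
      then show ?thesis using exchanged_edge_separates_new by simp
    next
      case 2
      have "\<not> reach (exchanged - {{u,v}}) v u" by (meson exchanged_edge_separates_new reach_sym)
      then show ?thesis using 2 by (simp add: insert_commute)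
    qed
  next
    case False
    then show ?thesis using exchanged_edge_separates_old pq by blast
  qed
qed

lemma is_tree_exchanged: "is_tree V exchanged"
proof -
  have "\<forall>e\<in>exchanged. e \<subseteq> V \<and> card e = 2"
    using tree u_in_V v_in_V u_neq_v unfolding is_tree_def by auto
  then show ?thesis
    unfolding is_tree_def using u_in_V connected_exchanged acyclic_exchanged by blast
qed

lemma restrict_rel_exchanged_if_not_both:
  assumes "\<not> (x \<in> S \<and> y \<in> S)" and "(restrict_rel S (adj T))\<^sup>*\<^sup>* a b"
  shows "(restrict_rel S (adj exchanged))\<^sup>*\<^sup>* a b"
  by (rule restrict_rel_rtranclp_mono[OF order_refl _ assms(2)])
    (use assms(1) in \<open>auto simp: adj_def doubleton_eq_iff\<close>)

text \<open>Inside a hyperedge containing \<open>u\<close>, \<open>v\<close>, \<open>x\<close> and \<open>y\<close>, the path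
  \<open>x \<leadsto> u \<leadsto> v \<leadsto> y\<close> replaces the edge \<open>xy\<close>: its two halves stay on one side of \<open>xy\<close>
  and inside the hyperedge, since subtrees intersect in subtrees.\<close>

lemma exchanged_joins_x_y:
  assumes conn: "connected_on e (adj T)" and "x \<in> e" "y \<in> e" "u \<in> e" "v \<in> e"
  shows "(restrict_rel e (adj exchanged))\<^sup>*\<^sup>* x y"
proof -
  define P where "P = {z. reach forest x z}"
  define Q where "Q = {z. reach forest y z}"
  have "connected_on (e \<inter> P) (adj T)" "connected_on (e \<inter> Q) (adj T)"
    unfolding P_def Q_def using connected_on_Int[OF tree_acyclic conn] connected_on_reach_set[of forest T]
    by auto
  moreover have "x \<in> P" "u \<in> P" "y \<notin> P" "y \<in> Q" "v \<in> Q" "x \<notin> Q"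
    unfolding P_def Q_def using x_u y_v sides_disjoint by auto
  ultimately have "(restrict_rel (e \<inter> P) (adj exchanged))\<^sup>*\<^sup>* x u"
    and "(restrict_rel (e \<inter> Q) (adj exchanged))\<^sup>*\<^sup>* v y"
    using assms(2-5) restrict_rel_exchanged_if_not_both unfolding connected_on_iff by blast+
  then have "(restrict_rel e (adj exchanged))\<^sup>*\<^sup>* x u" "(restrict_rel e (adj exchanged))\<^sup>*\<^sup>* v y"
    by (auto elim: restrict_rel_rtranclp_mono[rotated 2])
  moreover have "restrict_rel e (adj exchanged) u v"
    using assms(4,5) u_neq_v unfolding restrict_rel_def adj_def by auto
  ultimately show ?thesis by (meson rtranclp.rtrancl_into_rtrancl rtranclp_trans)
qed

lemma connected_on_exchanged:
  assumes conn: "connected_on e (adj T)" and cond: "(u \<in> e \<and> v \<in> e) \<or> \<not> (x \<in> e \<and> y \<in> e)"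
  shows "connected_on e (adj exchanged)"
proof -
  let ?R = "restrict_rel e (adj exchanged)"
  have lift: "?R\<^sup>*\<^sup>* c d" if "restrict_rel e (adj T) c d" for c d
  proof (cases "{c,d} = {x,y}")
    case True
    then have "c \<in> e" "d \<in> e" "x \<in> e" "y \<in> e"
      using that unfolding restrict_rel_def by (auto simp: doubleton_eq_iff)
    then have "?R\<^sup>*\<^sup>* x y" using exchanged_joins_x_y[OF conn] cond by blast
    moreover from this have "?R\<^sup>*\<^sup>* y x" by (rule sympD[OF symp_rtranclp[OF symp_restrict_rel_adj]])
    moreover have "c = x \<and> d = y \<or> c = y \<and> d = x" using True by (auto simp: doubleton_eq_iff)
    ultimately show ?thesis by blast
  next
    case False
    then have "?R c d" using that unfolding restrict_rel_def adj_def by auto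
    then show ?thesis by (rule r_into_rtranclp)
  qed
  show ?thesis unfolding connected_on_iff
  proof (intro ballI)
    fix a b assume "a \<in> e" "b \<in> e"
    then have "(restrict_rel e (adj T))\<^sup>*\<^sup>* a b" using conn unfolding connected_on_iff by blast
    then show "?R\<^sup>*\<^sup>* a b" by (rule rtranclp_lift) (rule lift)
  qed
qed

end

lemma same_component_if_edge_not_containing:
  assumes "e \<in> E" and "e \<subseteq> V" and "\<not> A \<subseteq> e" and "a \<in> e" and "b \<in> e" and "a \<noteq> b"
  shows "same_component V (edges_not_containing E A) a b"
  using assms unfolding same_component_def two_section_adj_def edges_not_containing_def
  by (intro r_into_rtranclp) blast

lemma separated_if_host_tree_edge:
  assumes host: "host_tree V E T" and uv: "{u, v} \<in> T" "u \<noteq> v"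
  shows "\<not> same_component V (edges_not_containing E (I_H V E {u, v})) u v"
proof
  let ?P = "reach (T - {{u,v}}) u"
  assume "same_component V (edges_not_containing E (I_H V E {u, v})) u v"
  moreover have "\<not> ?P v"
    using acyclic_edge_separates[OF _ uv] host unfolding host_tree_def is_tree_def by blast
  ultimately obtain a b where "?P a" "\<not> ?P b"
    and "two_section_adj (edges_not_containing E (I_H V E {u, v})) a b"
    using rtranclp_crossing_step[of _ u v ?P] unfolding same_component_def by blast
  then obtain e where e: "e \<in> E" "\<not> I_H V E {u, v} \<subseteq> e" "a \<in> e" "b \<in> e"
    unfolding two_section_adj_def edges_not_containing_def by blast
  have "(restrict_rel e (adj T))\<^sup>*\<^sup>* a b"
    using host e(1,3,4) unfolding host_tree_def connected_on_iff by blast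
  then have "u \<in> e \<and> v \<in> e" using \<open>?P a\<close> \<open>\<not> ?P b\<close> by (rule separating_edge_within)
  then have "I_H V E {u, v} \<subseteq> e" using e(1) unfolding I_H_def by auto
  with e(2) show False by contradiction
qed

lemma I_H_eq_if_edges_contain:
  assumes edges: "\<forall>e\<in>E. e \<subseteq> V" and A: "A = V \<or> edge_intersection E A"
    and "u \<in> A" and "v \<in> A" and contain: "\<And>e. e \<in> E \<Longrightarrow> u \<in> e \<Longrightarrow> v \<in> e \<Longrightarrow> A \<subseteq> e"
  shows "I_H V E {u, v} = A"
proof (cases "\<exists>e\<in>E. {u,v} \<subseteq> e")
  case True
  have "\<Inter>{e \<in> E. {u,v} \<subseteq> e} = A"
  proof
    show "A \<subseteq> \<Inter>{e \<in> E. {u,v} \<subseteq> e}" using contain by blast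
    show "\<Inter>{e \<in> E. {u,v} \<subseteq> e} \<subseteq> A"
      using A
    proof
      assume "A = V"
      then show ?thesis using True edges by blast
    next
      assume "edge_intersection E A"
      then obtain S where "S \<subseteq> E" "S \<noteq> {}" "A = \<Inter>S" unfolding edge_intersection_def by blast
      then show ?thesis using assms(3,4) by blast
    qed
  qed
  then show ?thesis unfolding I_H_def using True by simp
next
  case False
  then have "A = V" using A assms(3,4) unfolding edge_intersection_def by blast
  then show ?thesis unfolding I_H_def if_not_P[OF False] by simp
qed

lemma host_tree_with_edge_if_separated:
  assumes host: "host_tree V E T" and edges: "\<forall>e\<in>E. e \<subseteq> V"
    and "u \<in> A" and "v \<in> A" and "u \<in> V" and "v \<in> V" and "u \<noteq> v"
    and sep: "\<not> same_component V (edges_not_containing E A) u v"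
  shows "\<exists>T'. host_tree V E T' \<and> {u, v} \<in> T'"
proof -
  let ?C = "{z. same_component V (edges_not_containing E A) u z}"
  have tree: "is_tree V T" and conn: "\<forall>e\<in>E. connected_on e (adj T)"
    using host unfolding host_tree_def by auto
  have "reach T u v" using tree assms(5,6) by (rule is_tree_reach)
  then obtain zs where "rtrancl_path (adj T) u zs v" unfolding rtranclp_eq_rtrancl_path by blast
  then obtain zs where path: "rtrancl_path (adj T) u zs v" "distinct (u # zs)"
    by (rule rtrancl_path_distinct)
  have "u \<in> ?C" "v \<notin> ?C" using sep by (auto simp: same_component_def)
  then obtain x y where xy: "x \<in> ?C" "y \<notin> ?C" "adj T x y"
    "reach (T - {{x,y}}) u x" "reach (T - {{x,y}}) y v"
    using path_exit_edge[OF path] by blast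
  interpret edge_exchange V T x y u v
    by unfold_locales (use tree xy(3) reach_sym[OF xy(4)] xy(5) assms(5-7) in auto)
  have "(u \<in> e \<and> v \<in> e) \<or> \<not> (x \<in> e \<and> y \<in> e)" if "e \<in> E" for e
  proof (cases "A \<subseteq> e")
    case False
    have "\<not> (x \<in> e \<and> y \<in> e)"
    proof
      assume "x \<in> e \<and> y \<in> e"
      moreover have "e \<subseteq> V" "x \<noteq> y" using edges that adj_x_y unfolding adj_def by auto
      ultimately have "same_component V (edges_not_containing E A) x y"
        using same_component_if_edge_not_containing[OF that _ False] by blast
      moreover have "same_component V (edges_not_containing E A) u x" using xy(1) by simp
      ultimately have "same_component V (edges_not_containing E A) u y"
        unfolding same_component_def by (rule rtranclp_trans[rotated])
      then have "y \<in> ?C" by simp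
      with xy(2) show False by contradiction
    qed
    then show ?thesis ..
  qed (use assms(3,4) in blast)
  then have "host_tree V E exchanged"
    using is_tree_exchanged connected_on_exchanged conn unfolding host_tree_def by blast
  then show ?thesis by blast
qed

theorem mainTheorem12:
  fixes V :: "'a set" and E :: "'a set set" and B :: "'a set" and u v :: 'a
  assumes "hypertree V E"
    and "basic_set V E B"
    and "u \<in> B" and "v \<in> B" and "u \<noteq> v"
  shows "(I_H V E {u, v} = B \<and> (\<exists>T. host_tree V E T \<and> {u, v} \<in> T))
         \<longleftrightarrow> \<not> same_component V (edges_not_containing E B) u v"
proof
  assume "I_H V E {u, v} = B \<and> (\<exists>T. host_tree V E T \<and> {u, v} \<in> T)"
  then obtain T where "I_H V E {u, v} = B" and "host_tree V E T" and "{u, v} \<in> T" by blast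
  with separated_if_host_tree_edge[OF _ _ assms(5)]
  show "\<not> same_component V (edges_not_containing E B) u v" by metis
next
  assume sep: "\<not> same_component V (edges_not_containing E B) u v"
  obtain T where "hypergraph V E" and host: "host_tree V E T"
    using assms(1) unfolding hypertree_def by blast
  then have edges: "\<forall>e\<in>E. e \<subseteq> V" unfolding hypergraph_def by blast
  have "B \<subseteq> V" using basic_set_cases[OF assms(2)] by blast
  with assms(3,4) have "u \<in> V" "v \<in> V" by auto
  have "B \<subseteq> e" if "e \<in> E" "u \<in> e" "v \<in> e" for e
    using same_component_if_edge_not_containing[OF that(1) _ _ that(2,3) assms(5)] sep edges that(1)
    by blast
  then have "I_H V E {u, v} = B"
    by (rule I_H_eq_if_edges_contain[OF edges basic_set_edge_intersection[OF assms(1,2)] assms(3,4)])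
  moreover have "\<exists>T. host_tree V E T \<and> {u, v} \<in> T"
    by (rule host_tree_with_edge_if_separated[OF host edges assms(3,4) \<open>u \<in> V\<close> \<open>v \<in> V\<close> assms(5) sep])
  ultimately show "I_H V E {u, v} = B \<and> (\<exists>T. host_tree V E T \<and> {u, v} \<in> T)" ..
qed

end
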